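(* Let $f:X\to Y$ be a continuous surjection between compact spaces such that $f$ is light, i.e. every fibre $f^{-1}(y)$, $y\in Y$, is zero-dimensional. Let $A$ be the set of all continuous functions $u:X\to [0,1]$ such that $u[f^{-1}(y)]$ is zero-dimensional for every $y\in Y$. If $Y$ has property $C$, then $A$ is a dense $G_\delta$-subset of $C(X,[0,1])$.
   Context: Compact spaces are Hausdorff. $C(X,[0,1])$ denotes the space of all continuous maps $u:X\to[0,1]$ with the sup-metric $d(u,v)=\sup_{x\in X}|u(x)-v(x)|$. A space $Y$ has property $C$ (is a $C$-space) if for every sequence $\{\alpha_n:n\in\omega\}$ of open covers of $Y$ there is a sequence $\{\mu_n:n\in\omega\}$, where each $\mu_n$ is a family of pairwise disjoint open subsets of $Y$ refining $\alpha_n$, such that $\bigcup_{n\in\omega}\mu_n$ covers $Y$. *)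

theory Defs
  imports "HOL-Analysis.Analysis"
begin

definition C_space :: "'b topology \<Rightarrow> bool" where
  "C_space Y \<longleftrightarrow>
     (\<forall>\<alpha> :: nat \<Rightarrow> 'b set set.
        (\<forall>n. (\<forall>U\<in>\<alpha> n. openin Y U) \<and> topspace Y \<subseteq> \<Union>(\<alpha> n)) \<longrightarrow>
        (\<exists>\<mu> :: nat \<Rightarrow> 'b set set.
           (\<forall>n. (\<forall>V\<in>\<mu> n. openin Y V \<and> (\<exists>U\<in>\<alpha> n. V \<subseteq> U)) \<and> pairwise disjnt (\<mu> n)) \<and>
           topspace Y \<subseteq> \<Union>(\<Union>n. \<mu> n)))"

text \<open>The metric space C(X,[0,1]) with the sup-metric (functions extensional on the topspace).\<close>
definition CX01 :: "'a topology \<Rightarrow> ('a \<Rightarrow> real) metric" where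
  "CX01 X = cfunspace X (submetric euclidean_metric {0..1::real})"

end

theory Submission
  imports Defs
begin

text \<open>Write \<open>F\<^sub>y\<close> for the fibre of \<open>f\<close> over \<open>y\<close>. A set of reals is zero-dimensional iff it contains
  no nondegenerate interval, so \<open>A\<close> is the intersection of the sets \<open>A(p,q)\<close> (\<open>p < q\<close> rational)
  of maps \<open>u\<close> such that no \<open>u[F\<^sub>y]\<close> contains \<open>[p,q]\<close>. Each \<open>A(p,q)\<close> is open because the fibres
  are compact and \<open>f\<close> is closed, and \<open>C(X,[0,1])\<close> is complete, so by Baire's theorem it
  suffices to show that each \<open>A(p,q)\<close> is dense.

  Given \<open>u\<close>, pick points \<open>t\<^sub>n \<in> [p,q]\<close> with pairwise disjoint small neighbourhoods of
  radius \<open>r\<^sub>n\<close>. Since \<open>F\<^sub>y\<close> is zero-dimensional, a neighbourhood of \<open>F\<^sub>y\<close> splits into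
  disjoint open parts on which \<open>u > t\<^sub>n - r\<^sub>n/2\<close> and \<open>u < t\<^sub>n\<close> respectively, and this works
  uniformly over a neighbourhood of \<open>y\<close>. Property C of \<open>Y\<close> and compactness turn these local
  splittings into finitely many levels \<open>n < N\<close>, each given by disjoint closed pieces of \<open>Y\<close>,
  and an Urysohn function \<open>\<lambda>\<^sub>n\<close> that is \<open>1\<close> on the first part and \<open>0\<close> on the second.
  Then \<open>v = u + \<Sum>\<^sub>n<N \<lambda>\<^sub>n \<cdot> tent\<^sub>n(u)\<close> is close to \<open>u\<close>, and over the pieces of level \<open>n\<close> the
  tent around \<open>t\<^sub>n\<close> pushes the values of \<open>u\<close> away from \<open>t\<^sub>n\<close>, so \<open>v[F\<^sub>y]\<close> misses \<open>t\<^sub>n\<close>.\<close>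

lemma real_set_dim_le_0_iff:
  fixes S :: "real set"
  shows "subtopology euclideanreal S dim_le 0 \<longleftrightarrow> (\<forall>a b. a < b \<longrightarrow> \<not> {a..b} \<subseteq> S)"
proof
  assume dim: "subtopology euclideanreal S dim_le 0"
  show "\<forall>a b. a < b \<longrightarrow> \<not> {a..b} \<subseteq> S"
  proof (intro allI impI notI)
    fix a b :: real assume ab: "a < b" and sub: "{a..b} \<subseteq> S"
    have "subtopology euclideanreal {a..b} dim_le 0"
      using dimension_le_subtopology [OF dim, of "{a..b}"] sub
      by (simp add: subtopology_subtopology inf.absorb2)
    moreover have "openin (top_of_set {a..b}) {a<..<b}"
      by (metis Int_absorb1 greaterThanLessThan_subseteq_atLeastAtMost_iff open_greaterThanLessThan
          openin_open_Int order_refl)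
    moreover have "(a+b)/2 \<in> {a<..<b}"
      using ab by auto
    ultimately obtain U V where UV: "openin (top_of_set {a..b}) U" "closedin (top_of_set {a..b}) V"
      "openin (top_of_set {a..b}) V" "(a+b)/2 \<in> U" "U \<subseteq> V" "V \<subseteq> {a<..<b}"
      unfolding dimension_le_0_neighbourhood_base_of_clopen neighbourhood_base_of by metis
    then have "V = {} \<or> V = {a..b}"
      using connected_clopen [of "{a..b}"] by auto
    moreover have "a \<in> {a..b} - {a<..<b}"
      using ab by auto
    ultimately show False
      using UV by blast
  qed
next
  assume no_interval: "\<forall>a b. a < b \<longrightarrow> \<not> {a..b} \<subseteq> S"
  show "subtopology euclideanreal S dim_le 0"
    unfolding dimension_le_0_neighbourhood_base_of_clopen neighbourhood_base_of
  proof (intro allI impI, elim conjE)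
    fix W x assume W: "openin (top_of_set S) W" and "x \<in> W"
    obtain T where T: "open T" "W = S \<inter> T" using W by (auto simp: openin_open)
    obtain e where e: "e > 0" "ball x e \<subseteq> T" using T \<open>x \<in> W\<close> by (meson IntD2 openE)
    obtain \<alpha> where \<alpha>: "\<alpha> \<in> {x - e/2 .. x - e/4}" "\<alpha> \<notin> S"
      using no_interval [rule_format, of "x - e/2" "x - e/4"] e by force
    obtain \<beta> where \<beta>: "\<beta> \<in> {x + e/4 .. x + e/2}" "\<beta> \<notin> S"
      using no_interval [rule_format, of "x + e/4" "x + e/2"] e by force
    define V where "V = S \<inter> {\<alpha><..<\<beta>}"
    have "V = S \<inter> {\<alpha>..\<beta>}"
      using \<alpha> \<beta> unfolding V_def by (auto simp: order.order_iff_strict)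
    then have "closedin (top_of_set S) V"
      by (simp add: closedin_closed_Int)
    moreover have "openin (top_of_set S) V"
      by (simp add: V_def openin_open_Int)
    moreover have "x \<in> V" "V \<subseteq> W"
      using \<open>x \<in> W\<close> T \<alpha> \<beta> e by (auto simp: V_def dist_real_def subset_iff)
    ultimately show "\<exists>U V. openin (top_of_set S) U \<and> (closedin (top_of_set S) V \<and> openin (top_of_set S) V)
                       \<and> x \<in> U \<and> U \<subseteq> V \<and> V \<subseteq> W"
      by blast
  qed
qed

lemma compact_space_finite_point_cover:
  assumes "compact_space Y" and "\<And>y. y \<in> topspace Y \<Longrightarrow> openin Y (G y) \<and> y \<in> G y"
  obtains F where "finite F" "F \<subseteq> topspace Y" "topspace Y \<subseteq> \<Union>(G ` F)"
proof -
  have "(\<forall>U\<in>G ` topspace Y. openin Y U) \<and> topspace Y \<subseteq> \<Union>(G ` topspace Y)"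
    using assms(2) by blast
  then obtain \<F> where "finite \<F>" "\<F> \<subseteq> G ` topspace Y" "topspace Y \<subseteq> \<Union>\<F>"
    using assms(1) unfolding compact_space_alt by meson
  then show thesis
    using that by (metis finite_subset_image)
qed

lemma compact_dim_le_0_clopen_separation:
  assumes "compact_space Z" "Z dim_le 0" "closedin Z S" "closedin Z T" "disjnt S T"
  obtains C where "closedin Z C" "openin Z C" "S \<subseteq> C" "disjnt C T"
proof -
  have "\<exists>V. closedin Z V \<and> openin Z V \<and> x \<in> V \<and> V \<subseteq> topspace Z - T" if "x \<in> S" for x
  proof -
    have "openin Z (topspace Z - T)" "x \<in> topspace Z - T"
      using assms(3-5) that closedin_subset by (fastforce simp: disjnt_iff)+
    then show ?thesis
      using assms(2) unfolding dimension_le_0_neighbourhood_base_of_clopen neighbourhood_base_of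
      by (meson subsetD)
  qed
  then obtain V where V: "\<And>x. x \<in> S \<Longrightarrow> closedin Z (V x) \<and> openin Z (V x) \<and> x \<in> V x \<and> V x \<subseteq> topspace Z - T"
    by metis
  have "compactin Z S"
    using assms(1,3) closedin_compact_space by blast
  then obtain F where F: "finite F" "F \<subseteq> S" "S \<subseteq> \<Union>(V ` F)"
    unfolding compactin_def using V by (smt (verit, ccfv_SIG) UN_I finite_subset_image image_iff subsetI)
  show thesis
  proof
    show "closedin Z (\<Union>(V ` F))" "openin Z (\<Union>(V ` F))"
      using F V by (auto intro!: closedin_Union openin_Union)
    show "disjnt (\<Union>(V ` F)) T"
      using F V by (force simp: disjnt_iff)
  qed (use F in auto)
qed

text \<open>A clopen subset of the zero-dimensional set \<open>F\<close> separates the points where \<open>u \<le> a\<close> from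
  those where \<open>u \<ge> b\<close>; normality of \<open>X\<close> turns this clopen partition of \<open>F\<close> into two
  disjoint open sets of \<open>X\<close>.\<close>

lemma closedin_dim_le_0_level_split:
  assumes X: "compact_space X" "Hausdorff_space X"
    and F: "closedin X F" "subtopology X F dim_le 0"
    and u: "continuous_map X euclideanreal u" and "a < b"
  obtains W1 W2 where "openin X W1" "openin X W2" "disjnt W1 W2" "F \<subseteq> W1 \<union> W2"
    "\<And>x. x \<in> W1 \<Longrightarrow> a < u x" "\<And>x. x \<in> W2 \<Longrightarrow> u x < b"
proof -
  define Z where "Z = subtopology X F"
  have Z: "topspace Z = F" "compact_space Z" "Z dim_le 0"
    using X(1) F closedin_subset closedin_compact_space compact_space_subtopology
    by (fastforce simp: Z_def)+
  have uZ: "continuous_map Z euclideanreal u"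
    unfolding Z_def using u continuous_map_from_subtopology by blast
  have "closedin Z {x \<in> topspace Z. u x \<in> {..a}}" "closedin Z {x \<in> topspace Z. u x \<in> {b..}}"
    by (rule closedin_continuous_map_preimage [OF uZ], simp)+
  moreover have "disjnt {x \<in> topspace Z. u x \<in> {..a}} {x \<in> topspace Z. u x \<in> {b..}}"
    using \<open>a < b\<close> by (auto simp: disjnt_def)
  ultimately obtain C where C: "closedin Z C" "openin Z C"
      "{x \<in> topspace Z. u x \<in> {..a}} \<subseteq> C" "disjnt C {x \<in> topspace Z. u x \<in> {b..}}"
    using compact_dim_le_0_clopen_separation [OF Z(2,3)] by blast
  have "closedin Z (topspace Z - C)"
    using C(2) by blast
  then have "closedin X C" "closedin X (F - C)"
    using closedin_trans_full [OF _ F(1)] C(1) Z(1) unfolding Z_def by auto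
  moreover have "disjnt (F - C) C"
    by (auto simp: disjnt_def)
  moreover have "normal_space X"
    using X compact_Hausdorff_or_regular_imp_normal_space by blast
  ultimately obtain G1 G2 where G: "openin X G1" "openin X G2" "F - C \<subseteq> G1" "C \<subseteq> G2" "disjnt G1 G2"
    unfolding normal_space_def by meson
  define W1 where "W1 = G1 \<inter> {x \<in> topspace X. u x \<in> {a<..}}"
  define W2 where "W2 = G2 \<inter> {x \<in> topspace X. u x \<in> {..<b}}"
  have W: "openin X W1" "openin X W2" "disjnt W1 W2"
    using G openin_continuous_map_preimage [OF u, of "{a<..}"] openin_continuous_map_preimage [OF u, of "{..<b}"]
    by (auto simp: W1_def W2_def disjnt_def)
  have "F \<subseteq> W1 \<union> W2"
  proof
    fix x assume x: "x \<in> F"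
    then have "x \<in> topspace X"
      using F(1) closedin_subset by blast
    show "x \<in> W1 \<union> W2"
    proof (cases "x \<in> C")
      case True
      then have "u x < b"
        using C(4) x Z(1) by (force simp: disjnt_iff)
      with True show ?thesis
        using G(4) \<open>x \<in> topspace X\<close> by (auto simp: W2_def)
    next
      case False
      then have "a < u x"
        using C(3) x Z(1) by force
      with False show ?thesis
        using G(3) x \<open>x \<in> topspace X\<close> by (auto simp: W1_def)
    qed
  qed
  with W show thesis
    using that by (auto simp: W1_def W2_def)
qed

lemma mem_CX01:
  assumes "compact_space X"
  shows "u \<in> mspace (CX01 X) \<longleftrightarrow>
           (\<forall>x\<in>topspace X. 0 \<le> u x \<and> u x \<le> 1) \<and> u \<in> extensional (topspace X) \<and>
           continuous_map X euclideanreal u"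
proof -
  have "compactin X (topspace X)"
    using assms compact_space_def by blast
  then have "u \<in> mspace (CX01 X) \<longleftrightarrow> (\<forall>x\<in>topspace X. u x \<in> {0..1}) \<and> u \<in> extensional (topspace X)
              \<and> continuous_map X (top_of_set {0..1}) u"
    unfolding CX01_def
    by (simp only: compactin_mspace_cfunspace mtopology_of_submetric mtopology_of_euclidean
        mspace_submetric mspace_euclidean_metric Int_UNIV_right mem_Collect_eq)
  then show ?thesis
    by (auto simp: continuous_map_in_subtopology image_subset_iff)
qed

lemma mdist_CX01_lt:
  assumes "compact_space X" "u \<in> mspace (CX01 X)" "w \<in> mspace (CX01 X)"
    and "mdist (CX01 X) u w < r" "x \<in> topspace X"
  shows "\<bar>u x - w x\<bar> < r"
  using assms cfunspace_mdist_lt [of X u "submetric euclidean_metric {0..1}" w r x]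
  by (simp add: CX01_def compact_space_def dist_real_def)

lemma mdist_CX01_le:
  assumes "0 \<le> B" "\<And>x. x \<in> topspace X \<Longrightarrow> \<bar>u x - w x\<bar> \<le> B"
  shows "mdist (CX01 X) u w \<le> B"
  unfolding CX01_def using assms by (intro mdist_cfunspace_le) (auto simp: dist_real_def)

lemma mcomplete_CX01: "Metric_space.mcomplete (mspace (CX01 X)) (mdist (CX01 X))"
proof -
  interpret I: Submetric UNIV dist "{0..1::real}"
    by unfold_locales auto
  have "I.sub.mcomplete"
    by (intro I.closedin_mcomplete_imp_mcomplete) (auto simp: complete_UNIV)
  then have "mcomplete_of (cfunspace X I.sub.Self)"
    by (rule I.sub.mcomplete_cfunspace)
  moreover have "I.sub.Self = submetric euclidean_metric {0..1}"
    by (simp add: I.sub.Self_def submetric_def euclidean_metric_def)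
  ultimately show ?thesis
    by (simp add: mcomplete_of_def CX01_def)
qed

abbreviation fibre :: "'a topology \<Rightarrow> ('a \<Rightarrow> 'b) \<Rightarrow> 'b \<Rightarrow> 'a set"
  where "fibre X f y \<equiv> {x \<in> topspace X. f x = y}"

lemma closedin_fibre:
  assumes "Hausdorff_space Y" "continuous_map X Y f" "y \<in> topspace Y"
  shows "closedin X (fibre X f y)"
  using closedin_continuous_map_preimage [OF assms(2) closedin_t1_singleton, of y] assms
  by (simp add: Hausdorff_imp_t1_space)

lemma compact_fibre_neighbourhood:
  assumes "compact_space X" "Hausdorff_space Y" "continuous_map X Y f"
    and "openin X W" "y \<in> topspace Y" "fibre X f y \<subseteq> W"
  obtains V where "openin Y V" "y \<in> V" "{x \<in> topspace X. f x \<in> V} \<subseteq> W"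
proof -
  have "\<forall>W y. openin X W \<and> y \<in> topspace Y \<and> fibre X f y \<subseteq> W \<longrightarrow>
      (\<exists>V. openin Y V \<and> y \<in> V \<and> {x \<in> topspace X. f x \<in> V} \<subseteq> W)"
    using continuous_imp_closed_map [OF assms(3,1,2)] unfolding closed_map_fibre_neighbourhood
    by (rule conjunct2)
  then show thesis
    using assms(4-6) that by meson
qed

lemma omitted_value_stable:
  assumes X: "compact_space X" and Y: "Hausdorff_space Y" and f: "continuous_map X Y f"
    and u: "continuous_map X euclideanreal u"
    and y: "y \<in> topspace Y" and t: "t \<notin> u ` fibre X f y"
  obtains \<delta> N where "\<delta> > 0" "openin Y N" "y \<in> N"
    "\<forall>w y'. y' \<in> N \<longrightarrow> (\<forall>x\<in>topspace X. \<bar>u x - w x\<bar> < \<delta>) \<longrightarrow> t \<notin> w ` fibre X f y'"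
proof -
  have "compactin X (fibre X f y)"
    using closedin_fibre [OF Y f y] X closedin_compact_space by blast
  then have "compact (u ` fibre X f y)"
    using image_compactin [OF _ u] by force
  then have "open (- u ` fibre X f y)"
    by (simp add: compact_imp_closed open_Compl)
  then obtain e where e: "e > 0" "ball t e \<subseteq> - u ` fibre X f y"
    using t by (meson ComplI open_contains_ball_eq)
  define W where "W = {x \<in> topspace X. u x \<in> {z. e/2 < \<bar>z - t\<bar>}}"
  have "open {z::real. e/2 < \<bar>z - t\<bar>}"
    by (intro open_Collect_less continuous_intros)
  then have "openin X W"
    unfolding W_def using openin_continuous_map_preimage [OF u] by (simp only: open_openin)
  moreover have "fibre X f y \<subseteq> W"
  proof
    fix x assume x: "x \<in> fibre X f y"
    then have "u x \<notin> ball t e"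
      using e by auto
    then show "x \<in> W"
      using x e by (simp add: W_def dist_real_def abs_minus_commute)
  qed
  ultimately obtain N where N: "openin Y N" "y \<in> N" "{x \<in> topspace X. f x \<in> N} \<subseteq> W"
    using compact_fibre_neighbourhood [OF X Y f _ y] by metis
  have stable: "\<forall>w y'. y' \<in> N \<longrightarrow> (\<forall>x\<in>topspace X. \<bar>u x - w x\<bar> < e/2) \<longrightarrow> t \<notin> w ` fibre X f y'"
  proof (intro allI impI notI)
    fix w y'
    assume "y' \<in> N" "\<forall>x\<in>topspace X. \<bar>u x - w x\<bar> < e/2" "t \<in> w ` fibre X f y'"
    then obtain x where x: "x \<in> topspace X" "f x \<in> N" "w x = t" "\<bar>u x - w x\<bar> < e/2"
      by auto
    then have "e/2 < \<bar>u x - t\<bar>"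
      using N(3) unfolding W_def by blast
    with x(3,4) show False
      by simp
  qed
  have "e/2 > 0"
    using e by simp
  from that [OF this N(1,2) stable] show thesis .
qed

definition omitting :: "'a topology \<Rightarrow> 'b topology \<Rightarrow> ('a \<Rightarrow> 'b) \<Rightarrow> real \<Rightarrow> real \<Rightarrow> ('a \<Rightarrow> real) set"
  where "omitting X Y f p q =
           {u \<in> mspace (CX01 X). \<forall>y\<in>topspace Y. \<not> {p..q} \<subseteq> u ` fibre X f y}"

lemma openin_omitting:
  assumes X: "compact_space X" and Y: "compact_space Y" "Hausdorff_space Y"
    and f: "continuous_map X Y f"
  shows "openin (mtopology_of (CX01 X)) (omitting X Y f p q)"
proof -
  interpret M: Metric_space "mspace (CX01 X)" "mdist (CX01 X)"
    by simp
  have "\<exists>r>0. M.mball u r \<subseteq> omitting X Y f p q" if u: "u \<in> omitting X Y f p q" for u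
  proof -
    have uM: "u \<in> mspace (CX01 X)"
      using u by (simp add: omitting_def)
    then have u_cont: "continuous_map X euclideanreal u"
      using mem_CX01 [OF X] by blast
    define stable where "stable t \<delta> N \<longleftrightarrow>
        (\<forall>w y'. y' \<in> N \<longrightarrow> (\<forall>x\<in>topspace X. \<bar>u x - w x\<bar> < \<delta>) \<longrightarrow> t \<notin> w ` fibre X f y')"
      for t \<delta> N
    have "\<exists>t \<delta> N. t \<in> {p..q} \<and> \<delta> > 0 \<and> openin Y N \<and> y \<in> N \<and> stable t \<delta> N"
      if y: "y \<in> topspace Y" for y
    proof -
      obtain t where t: "t \<in> {p..q}" "t \<notin> u ` fibre X f y"
        using u y unfolding omitting_def by blast
      obtain \<delta> N where "\<delta> > 0" "openin Y N" "y \<in> N"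
        "\<forall>w y'. y' \<in> N \<longrightarrow> (\<forall>x\<in>topspace X. \<bar>u x - w x\<bar> < \<delta>) \<longrightarrow> t \<notin> w ` fibre X f y'"
        using omitted_value_stable [OF X Y(2) f u_cont y t(2)] by blast
      with t show ?thesis
        unfolding stable_def by blast
    qed
    then obtain t \<delta> N where nbhd: "\<And>y. y \<in> topspace Y \<Longrightarrow>
        t y \<in> {p..q} \<and> \<delta> y > 0 \<and> openin Y (N y) \<and> y \<in> N y \<and> stable (t y) (\<delta> y) (N y)"
      by metis
    obtain F where F: "finite F" "F \<subseteq> topspace Y" "topspace Y \<subseteq> \<Union>(N ` F)"
      using compact_space_finite_point_cover [OF Y(1), of N] nbhd by blast
    define r where "r = Min (insert 1 (\<delta> ` F))"
    have "r > 0"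
      using F nbhd by (auto simp: r_def)
    moreover have "w \<in> omitting X Y f p q" if w: "w \<in> M.mball u r" for w
    proof -
      have "\<not> {p..q} \<subseteq> w ` fibre X f y'" if y': "y' \<in> topspace Y" for y'
      proof -
        obtain y where y: "y \<in> F" "y' \<in> N y"
          using F y' by blast
        have "\<bar>u x - w x\<bar> < \<delta> y" if "x \<in> topspace X" for x
          using mdist_CX01_lt [OF X uM _ _ that] w F y by (auto simp: r_def)
        then show ?thesis
          using nbhd [of y] y F unfolding stable_def by blast
      qed
      then show ?thesis
        using w by (simp add: omitting_def)
    qed
    ultimately show ?thesis
      by blast
  qed
  then show ?thesis
    unfolding mtopology_of_def M.openin_mtopology omitting_def by blast
qed

definition level_split :: "'a topology \<Rightarrow> ('a \<Rightarrow> 'b) \<Rightarrow> ('a \<Rightarrow> real) \<Rightarrow> real \<Rightarrow> real \<Rightarrow> 'b set \<Rightarrow> bool"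
  where "level_split X f u a b V \<longleftrightarrow>
           (\<exists>W1 W2. openin X W1 \<and> openin X W2 \<and> disjnt W1 W2 \<and>
              {x \<in> topspace X. f x \<in> V} \<subseteq> W1 \<union> W2 \<and> (\<forall>x\<in>W1. a < u x) \<and> (\<forall>x\<in>W2. u x < b))"

lemma level_split_subset: "level_split X f u a b V \<Longrightarrow> V' \<subseteq> V \<Longrightarrow> level_split X f u a b V'"
  unfolding level_split_def by blast

lemma light_fibre_level_split:
  assumes X: "compact_space X" "Hausdorff_space X" and Y: "Hausdorff_space Y"
    and f: "continuous_map X Y f" and u: "continuous_map X euclideanreal u" and "a < b"
    and y: "y \<in> topspace Y" and light: "subtopology X (fibre X f y) dim_le 0"
  obtains V where "openin Y V" "y \<in> V" "level_split X f u a b V"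
proof -
  obtain W1 W2 where W: "openin X W1" "openin X W2" "disjnt W1 W2" "fibre X f y \<subseteq> W1 \<union> W2"
    "\<And>x. x \<in> W1 \<Longrightarrow> a < u x" "\<And>x. x \<in> W2 \<Longrightarrow> u x < b"
    using closedin_dim_le_0_level_split [OF X closedin_fibre [OF Y f y] light u \<open>a < b\<close>] by blast
  then have "openin X (W1 \<union> W2)"
    by blast
  then obtain V where V: "openin Y V" "y \<in> V" "{x \<in> topspace X. f x \<in> V} \<subseteq> W1 \<union> W2"
    using compact_fibre_neighbourhood [OF X(1) Y f _ y W(4)] by blast
  moreover have "level_split X f u a b V"
    unfolding level_split_def using W V(3) by blast
  ultimately show thesis
    using that by blast
qed

lemma pairwise_disjnt_closed_merge:
  assumes "finite I" "pairwise disjnt \<V>"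
    and "\<And>i. i \<in> I \<Longrightarrow> closedin Y (D i) \<and> V i \<in> \<V> \<and> D i \<subseteq> V i"
  defines "\<K> \<equiv> (\<lambda>W. \<Union>(D ` {i \<in> I. V i = W})) ` V ` I"
  shows "finite \<K>" "pairwise disjnt \<K>" "\<And>K. K \<in> \<K> \<Longrightarrow> closedin Y K \<and> (\<exists>W\<in>\<V>. K \<subseteq> W)"
    and "(\<Union>i\<in>I. D i) \<subseteq> \<Union>\<K>"
proof -
  define piece where "piece W = \<Union>(D ` {i \<in> I. V i = W})" for W
  have \<K>: "\<K> = piece ` V ` I"
    by (simp add: \<K>_def piece_def)
  have piece_sub: "piece W \<subseteq> W" for W
    using assms(3) by (auto simp: piece_def)
  show "finite \<K>"
    using assms(1) by (simp add: \<K>)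
  show "pairwise disjnt \<K>"
  proof (rule pairwiseI)
    fix K K' assume "K \<in> \<K>" "K' \<in> \<K>" "K \<noteq> K'"
    then obtain i i' where "i \<in> I" "i' \<in> I" "K = piece (V i)" "K' = piece (V i')"
      unfolding \<K> by blast
    moreover have "disjnt (V i) (V i')" if "V i \<noteq> V i'"
      using assms(2,3) \<open>i \<in> I\<close> \<open>i' \<in> I\<close> that unfolding pairwise_def by blast
    ultimately show "disjnt K K'"
      using piece_sub \<open>K \<noteq> K'\<close> by (metis disjnt_subset1 disjnt_subset2)
  qed
  show "closedin Y K \<and> (\<exists>W\<in>\<V>. K \<subseteq> W)" if K: "K \<in> \<K>" for K
  proof -
    obtain i where "i \<in> I" "K = piece (V i)"
      using K unfolding \<K> by blast
    then show ?thesis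
      using assms(1,3) piece_sub by (auto simp: piece_def intro!: closedin_Union)
  qed
  show "(\<Union>i\<in>I. D i) \<subseteq> \<Union>\<K>"
    unfolding \<K> piece_def by blast
qed

text \<open>Shrink the disjoint open refinements given by property C to closed neighbourhoods,
  take a finite subcover, and merge at each level the closed sets lying in a common member of the
  disjoint family.\<close>

lemma C_space_finite_closed_refinement:
  assumes Y: "compact_space Y" "Hausdorff_space Y" and C: "C_space Y"
    and \<alpha>: "\<And>n. \<forall>U\<in>\<alpha> n. openin Y U" "\<And>n. topspace Y \<subseteq> \<Union>(\<alpha> n)"
  obtains \<K> :: "nat \<Rightarrow> 'b set set" and N :: nat
  where "\<And>n. finite (\<K> n)" "\<And>n. pairwise disjnt (\<K> n)"
    and "\<And>n K. K \<in> \<K> n \<Longrightarrow> closedin Y K \<and> (\<exists>U\<in>\<alpha> n. K \<subseteq> U)"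
    and "topspace Y \<subseteq> (\<Union>n<N. \<Union>(\<K> n))"
proof -
  obtain \<mu> :: "nat \<Rightarrow> 'b set set"
    where \<mu>: "\<And>n. (\<forall>V\<in>\<mu> n. openin Y V \<and> (\<exists>U\<in>\<alpha> n. V \<subseteq> U)) \<and> pairwise disjnt (\<mu> n)"
      and \<mu>_cover: "topspace Y \<subseteq> \<Union>(\<Union>n. \<mu> n)"
    using C \<alpha> unfolding C_space_def by (metis (no_types, lifting))
  have reg: "neighbourhood_base_of (closedin Y) Y"
    using Y compact_Hausdorff_imp_regular_space neighbourhood_base_of_closedin by blast
  have "\<exists>n V U D. V \<in> \<mu> n \<and> openin Y U \<and> closedin Y D \<and> y \<in> U \<and> U \<subseteq> D \<and> D \<subseteq> V"
    if y: "y \<in> topspace Y" for y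
  proof -
    obtain n V where "V \<in> \<mu> n" "y \<in> V"
      using \<mu>_cover y by blast
    moreover have "openin Y V"
      using \<mu> \<open>V \<in> \<mu> n\<close> by blast
    ultimately show ?thesis
      using reg unfolding neighbourhood_base_of by meson
  qed
  then obtain n V U D where nVUD: "\<And>y. y \<in> topspace Y \<Longrightarrow>
      V y \<in> \<mu> (n y) \<and> openin Y (U y) \<and> closedin Y (D y) \<and> y \<in> U y \<and> U y \<subseteq> D y \<and> D y \<subseteq> V y"
    by metis
  obtain F where F: "finite F" "F \<subseteq> topspace Y" "topspace Y \<subseteq> \<Union>(U ` F)"
    using compact_space_finite_point_cover [OF Y(1), of U] nVUD by blast
  define \<K> where "\<K> m = (\<lambda>W. \<Union>(D ` {i \<in> {y \<in> F. n y = m}. V i = W})) ` V ` {y \<in> F. n y = m}" for m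
  have pieces: "closedin Y (D i) \<and> V i \<in> \<mu> (n i) \<and> D i \<subseteq> V i" if "i \<in> F" for i
    using nVUD [of i] F(2) that by blast
  have merge: "finite (\<K> m) \<and> pairwise disjnt (\<K> m) \<and> (\<forall>K\<in>\<K> m. closedin Y K \<and> (\<exists>W\<in>\<mu> m. K \<subseteq> W)) \<and>
      (\<Union>i\<in>{y \<in> F. n y = m}. D i) \<subseteq> \<Union>(\<K> m)" for m
  proof -
    have "finite {y \<in> F. n y = m}" "pairwise disjnt (\<mu> m)"
      "\<And>i. i \<in> {y \<in> F. n y = m} \<Longrightarrow> closedin Y (D i) \<and> V i \<in> \<mu> m \<and> D i \<subseteq> V i"
      using F(1) \<mu> pieces by auto
    from pairwise_disjnt_closed_merge [where D = D and V = V, OF this] show ?thesis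
      unfolding \<K>_def by blast
  qed
  show thesis
  proof
    show "finite (\<K> m)" "pairwise disjnt (\<K> m)" for m
      using merge [of m] by blast+
    show "closedin Y K \<and> (\<exists>U\<in>\<alpha> m. K \<subseteq> U)" if "K \<in> \<K> m" for K m
      using merge [of m] \<mu> [of m] that by (meson order_trans)
    show "topspace Y \<subseteq> (\<Union>m<Suc (Max (n ` F)). \<Union>(\<K> m))"
    proof
      fix z assume "z \<in> topspace Y"
      then obtain y where y: "y \<in> F" "z \<in> U y"
        using F(3) by blast
      then have "z \<in> \<Union>(\<K> (n y))"
        using merge [of "n y"] nVUD [of y] F(2) by blast
      moreover have "n y < Suc (Max (n ` F))"
        using F(1) y(1) by (simp add: le_imp_less_Suc)
      ultimately show "z \<in> (\<Union>m<Suc (Max (n ` F)). \<Union>(\<K> m))"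
        by blast
    qed
  qed
qed

lemma level_split_Urysohn:
  assumes X: "normal_space X" and f: "continuous_map X Y f"
    and \<K>: "finite \<K>" "pairwise disjnt \<K>" "\<And>K. K \<in> \<K> \<Longrightarrow> closedin Y K \<and> level_split X f u a b K"
  obtains g :: "'a \<Rightarrow> real" where "continuous_map X (top_of_set {0..1}) g"
    "\<And>x. x \<in> topspace X \<Longrightarrow> f x \<in> \<Union>\<K> \<Longrightarrow> (a < u x \<and> g x = 1) \<or> (u x < b \<and> g x = 0)"
proof -
  have "\<forall>K\<in>\<K>. \<exists>W1 W2. openin X W1 \<and> openin X W2 \<and> disjnt W1 W2 \<and>
      {x \<in> topspace X. f x \<in> K} \<subseteq> W1 \<union> W2 \<and> (\<forall>x\<in>W1. a < u x) \<and> (\<forall>x\<in>W2. u x < b)"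
    using \<K>(3) unfolding level_split_def by blast
  then obtain W1 where "\<forall>K\<in>\<K>. \<exists>W2. openin X (W1 K) \<and> openin X W2 \<and> disjnt (W1 K) W2 \<and>
      {x \<in> topspace X. f x \<in> K} \<subseteq> W1 K \<union> W2 \<and> (\<forall>x\<in>W1 K. a < u x) \<and> (\<forall>x\<in>W2. u x < b)"
    by (rule bchoice [THEN exE])
  then obtain W2 where W: "\<forall>K\<in>\<K>. openin X (W1 K) \<and> openin X (W2 K) \<and> disjnt (W1 K) (W2 K) \<and>
      {x \<in> topspace X. f x \<in> K} \<subseteq> W1 K \<union> W2 K \<and> (\<forall>x\<in>W1 K. a < u x) \<and> (\<forall>x\<in>W2 K. u x < b)"
    by (rule bchoice [THEN exE])
  define above where "above = (\<Union>K\<in>\<K>. {x \<in> topspace X. f x \<in> K} - W2 K)"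
  define below where "below = (\<Union>K\<in>\<K>. {x \<in> topspace X. f x \<in> K} - W1 K)"
  have preimage_closed: "closedin X {x \<in> topspace X. f x \<in> K}" if "K \<in> \<K>" for K
    using closedin_continuous_map_preimage [OF f] \<K>(3) that by blast
  have "closedin X above" "closedin X below"
    unfolding above_def below_def using \<K>(1) W preimage_closed
    by (auto intro!: closedin_Union closedin_diff)
  moreover have "disjnt below above"
  proof -
    have "K = K'" if "K \<in> \<K>" "K' \<in> \<K>" "f x \<in> K" "f x \<in> K'" for K K' x
      using \<K>(2) that unfolding pairwise_def disjnt_def by blast
    then show ?thesis
      unfolding above_def below_def disjnt_def using W by blast
  qed
  ultimately obtain g :: "'a \<Rightarrow> real" where g: "continuous_map X (top_of_set {0..1}) g"
      "g ` below \<subseteq> {0}" "g ` above \<subseteq> {1}"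
    using X unfolding normal_space_iff_Urysohn by meson
  show thesis
  proof (rule that [OF g(1)])
    fix x assume x: "x \<in> topspace X" "f x \<in> \<Union>\<K>"
    then obtain K where K: "K \<in> \<K>" "f x \<in> K"
      by blast
    show "(a < u x \<and> g x = 1) \<or> (u x < b \<and> g x = 0)"
    proof (cases "x \<in> W1 K")
      case True
      then have "x \<in> above"
        using bspec [OF W K(1)] K x unfolding above_def disjnt_def by blast
      then show ?thesis
        using g(3) bspec [OF W K(1)] True by blast
    next
      case False
      then have "x \<in> below" "x \<in> W2 K"
        using bspec [OF W K(1)] K x unfolding below_def by blast+
      then show ?thesis
        using g(2) bspec [OF W K(1)] by blast
    qed
  qed
qed

lemma C_space_light_level_functions:
  assumes X: "compact_space X" "Hausdorff_space X" and Y: "compact_space Y" "Hausdorff_space Y"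
    and f: "continuous_map X Y f" and light: "\<forall>y\<in>topspace Y. subtopology X (fibre X f y) dim_le 0"
    and C: "C_space Y" and u: "continuous_map X euclideanreal u" and ab: "\<And>n. a n < b n"
  obtains g :: "nat \<Rightarrow> 'a \<Rightarrow> real" and N
  where "\<And>n. continuous_map X (top_of_set {0..1}) (g n)"
    and "\<And>y. y \<in> topspace Y \<Longrightarrow>
           \<exists>n<N. \<forall>x\<in>fibre X f y. (a n < u x \<and> g n x = 1) \<or> (u x < b n \<and> g n x = 0)"
proof -
  define \<alpha> where "\<alpha> n = {V. openin Y V \<and> level_split X f u (a n) (b n) V}" for n
  have "topspace Y \<subseteq> \<Union>(\<alpha> n)" for n
  proof
    fix y assume y: "y \<in> topspace Y"
    obtain V where "openin Y V" "y \<in> V" "level_split X f u (a n) (b n) V"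
      using light_fibre_level_split [OF X Y(2) f u ab y] light y by blast
    then show "y \<in> \<Union>(\<alpha> n)"
      by (auto simp: \<alpha>_def)
  qed
  moreover have "\<forall>U\<in>\<alpha> n. openin Y U" for n
    by (simp add: \<alpha>_def)
  ultimately obtain \<K> N
    where \<K>: "\<And>n. finite (\<K> n)" "\<And>n. pairwise disjnt (\<K> n)"
      "\<And>n K. K \<in> \<K> n \<Longrightarrow> closedin Y K \<and> (\<exists>U\<in>\<alpha> n. K \<subseteq> U)"
      and cover: "topspace Y \<subseteq> (\<Union>n<N. \<Union>(\<K> n))"
    using C_space_finite_closed_refinement [OF Y C] by metis
  have "normal_space X"
    using X compact_Hausdorff_or_regular_imp_normal_space by blast
  have "\<exists>g :: 'a \<Rightarrow> real. continuous_map X (top_of_set {0..1}) g \<and>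
          (\<forall>x\<in>topspace X. f x \<in> \<Union>(\<K> n) \<longrightarrow> (a n < u x \<and> g x = 1) \<or> (u x < b n \<and> g x = 0))" for n
  proof -
    have "closedin Y K \<and> level_split X f u (a n) (b n) K" if "K \<in> \<K> n" for K
      using \<K>(3) [OF that] level_split_subset unfolding \<alpha>_def by blast
    then show ?thesis
      using level_split_Urysohn [OF \<open>normal_space X\<close> f \<K>(1,2)] by metis
  qed
  then obtain g :: "nat \<Rightarrow> 'a \<Rightarrow> real" where g: "\<And>n. continuous_map X (top_of_set {0..1}) (g n)"
    "\<And>n x. x \<in> topspace X \<Longrightarrow> f x \<in> \<Union>(\<K> n) \<Longrightarrow> (a n < u x \<and> g n x = 1) \<or> (u x < b n \<and> g n x = 0)"
    by metis
  show thesis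
  proof (rule that [OF g(1)])
    fix y assume "y \<in> topspace Y"
    then obtain n where "n < N" "y \<in> \<Union>(\<K> n)"
      using cover by blast
    then show "\<exists>n<N. \<forall>x\<in>fibre X f y. (a n < u x \<and> g n x = 1) \<or> (u x < b n \<and> g n x = 0)"
      using g(2) by blast
  qed
qed

definition tent :: "real \<Rightarrow> real \<Rightarrow> real \<Rightarrow> real"
  where "tent c r z = max 0 (r - \<bar>z - c\<bar>)"

lemma tent_nonneg: "0 \<le> tent c r z"
  by (simp add: tent_def)

lemma tent_eq_0: "r \<le> \<bar>z - c\<bar> \<Longrightarrow> tent c r z = 0"
  by (simp add: tent_def)

lemma sum_separated_tents_cases:
  fixes t r lam :: "nat \<Rightarrow> real"
  assumes sep: "\<And>n k. n \<noteq> k \<Longrightarrow> r n + r k \<le> \<bar>t n - t k\<bar>"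
  obtains "(\<Sum>n<N. lam n * tent (t n) (r n) z) = 0" "\<And>n. n < N \<Longrightarrow> r n \<le> \<bar>z - t n\<bar>"
    | k where "k < N" "\<bar>z - t k\<bar> < r k"
        "(\<Sum>n<N. lam n * tent (t n) (r n) z) = lam k * tent (t k) (r k) z"
proof (cases "\<exists>k<N. \<bar>z - t k\<bar> < r k")
  case True
  then obtain k where k: "k < N" "\<bar>z - t k\<bar> < r k"
    by blast
  have "tent (t n) (r n) z = 0" if "n \<noteq> k" for n
  proof (rule tent_eq_0)
    have "\<bar>t n - t k\<bar> \<le> \<bar>z - t n\<bar> + \<bar>z - t k\<bar>"
      by linarith
    then show "r n \<le> \<bar>z - t n\<bar>"
      using sep [OF that] k(2) by linarith
  qed
  then have "(\<Sum>n<N. lam n * tent (t n) (r n) z) = lam k * tent (t k) (r k) z"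
    using k(1) by (simp add: sum.remove [of _ k] sum.neutral)
  with k show thesis
    by (rule that(2))
next
  case False
  then have "r n \<le> \<bar>z - t n\<bar>" if "n < N" for n
    using that by (meson not_less)
  then show thesis
    by (intro that(1)) (auto simp: tent_eq_0 intro!: sum.neutral)
qed

lemma tent_perturbation_bounds:
  fixes t r lam :: "nat \<Rightarrow> real" and N :: nat and z B \<delta> :: real
  assumes "\<And>n k. n \<noteq> k \<Longrightarrow> r n + r k \<le> \<bar>t n - t k\<bar>"
    and "\<And>n. 0 \<le> lam n" "\<And>n. lam n \<le> 1"
    and "\<And>n. t n + r n \<le> B" "\<And>n. r n \<le> \<delta>" "z \<le> B" "0 \<le> \<delta>"
  defines "w \<equiv> z + (\<Sum>n<N. lam n * tent (t n) (r n) z)"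
  shows "z \<le> w" "w \<le> B" "w - z \<le> \<delta>"
proof -
  have "w = z \<or> (\<exists>k. \<bar>z - t k\<bar> < r k \<and> w = z + lam k * tent (t k) (r k) z)"
    by (rule sum_separated_tents_cases [OF assms(1), where N = N and lam = lam and z = z])
      (auto simp: w_def)
  then have "z \<le> w \<and> w \<le> B \<and> w - z \<le> \<delta>"
  proof (elim disjE exE conjE)
    assume "w = z"
    then show ?thesis
      using assms(6,7) by auto
  next
    fix k assume k: "\<bar>z - t k\<bar> < r k" "w = z + lam k * tent (t k) (r k) z"
    then have "0 \<le> lam k * tent (t k) (r k) z" "lam k * tent (t k) (r k) z \<le> r k - \<bar>z - t k\<bar>"
      using assms(2,3) [of k] by (simp_all add: tent_def mult_left_le_one_le)
    then show ?thesis
      using k assms(4,5) [of k] abs_ge_self [of "z - t k"] by linarith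
  qed
  then show "z \<le> w" "w \<le> B" "w - z \<le> \<delta>"
    by auto
qed

text \<open>Only the tent around \<open>z\<close> contributes, lifting \<open>z\<close> by \<open>lam k * (r k - \<bar>z - t k\<bar>)\<close>;
  this lands on \<open>t k\<close> only for \<open>z = t k - r k / 2\<close> when \<open>lam k = 1\<close> and only for \<open>z = t k\<close>
  when \<open>lam k = 0\<close>.\<close>

lemma tent_perturbation_misses_centre:
  fixes t r lam :: "nat \<Rightarrow> real"
  assumes sep: "\<And>n k. n \<noteq> k \<Longrightarrow> r n + r k \<le> \<bar>t n - t k\<bar>"
    and r_pos: "\<And>n. 0 < r n" and lam: "\<And>n. 0 \<le> lam n" "\<And>n. lam n \<le> 1"
    and "k < N" and side: "(t k - r k / 2 < z \<and> lam k = 1) \<or> (z < t k \<and> lam k = 0)"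
  shows "z + (\<Sum>n<N. lam n * tent (t n) (r n) z) \<noteq> t k"
proof
  assume hit: "z + (\<Sum>n<N. lam n * tent (t n) (r n) z) = t k"
  obtain j where j: "\<bar>z - t j\<bar> < r j" "z + lam j * tent (t j) (r j) z = t k"
  proof (rule sum_separated_tents_cases [OF sep, where N = N and lam = lam and z = z])
    assume "(\<Sum>n<N. lam n * tent (t n) (r n) z) = 0" "\<And>n. n < N \<Longrightarrow> r n \<le> \<bar>z - t n\<bar>"
    then show thesis
      using hit r_pos [of k] \<open>k < N\<close> by fastforce
  next
    fix j assume "\<bar>z - t j\<bar> < r j" "(\<Sum>n<N. lam n * tent (t n) (r n) z) = lam j * tent (t j) (r j) z"
    then show thesis
      using hit that by auto
  qed
  moreover have "j = k"
  proof (rule ccontr)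
    assume "j \<noteq> k"
    have "lam j * tent (t j) (r j) z \<le> r j - \<bar>z - t j\<bar>"
      using j(1) lam [of j] by (simp add: tent_def mult_left_le_one_le)
    moreover have "0 \<le> lam j * tent (t j) (r j) z"
      using lam [of j] by (simp add: tent_nonneg)
    ultimately have "\<bar>t k - t j\<bar> \<le> r j"
      unfolding abs_le_iff using j abs_ge_self [of "z - t j"] abs_ge_minus_self [of "z - t j"]
      by linarith
    then show False
      using sep [OF \<open>j \<noteq> k\<close>] r_pos [of k] by (auto simp: abs_minus_commute)
  qed
  ultimately have centre: "z + lam k * (r k - \<bar>z - t k\<bar>) = t k"
    by (simp add: tent_def)
  show False
  proof (cases "lam k = 1")
    case True
    then have "z + (r k - \<bar>z - t k\<bar>) = t k" "t k - r k / 2 < z"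
      using centre side by auto
    then show False
      using r_pos [of k] by (cases "t k \<le> z") (simp_all add: abs_of_nonneg abs_of_neg field_simps)
  next
    case False
    then show False
      using centre side by auto
  qed
qed

lemma tent_perturbation_image_misses_centre:
  fixes t r :: "nat \<Rightarrow> real" and g :: "nat \<Rightarrow> 'a \<Rightarrow> real"
  assumes sep: "\<And>n k. n \<noteq> k \<Longrightarrow> r n + r k \<le> \<bar>t n - t k\<bar>" and r_pos: "\<And>n. 0 < r n"
    and g01: "\<And>k x. x \<in> S \<Longrightarrow> 0 \<le> g k x \<and> g k x \<le> 1" and "n < N"
    and side: "\<forall>x\<in>S. (t n - r n / 2 < u x \<and> g n x = 1) \<or> (u x < t n \<and> g n x = 0)"
  shows "t n \<notin> (\<lambda>x. u x + (\<Sum>k<N. g k x * tent (t k) (r k) (u x))) ` S"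
proof
  assume "t n \<in> (\<lambda>x. u x + (\<Sum>k<N. g k x * tent (t k) (r k) (u x))) ` S"
  then obtain x where "x \<in> S" "u x + (\<Sum>k<N. g k x * tent (t k) (r k) (u x)) = t n"
    by auto
  moreover have "u x + (\<Sum>k<N. g k x * tent (t k) (r k) (u x)) \<noteq> t n"
    using side \<open>x \<in> S\<close>
    by (intro tent_perturbation_misses_centre [where lam = "\<lambda>k. g k x"])
      (simp_all add: sep r_pos g01 \<open>n < N\<close>)
  ultimately show False
    by blast
qed

lemma dyadic_tents_separated:
  fixes s m :: real
  assumes "0 \<le> m" "m \<le> s" "n \<noteq> k"
  shows "m / 2^(n+3) + m / 2^(k+3) \<le> \<bar>s / 2^(n+1) - s / 2^(k+1)\<bar>"
proof -
  have *: "m / 2^(i+3) + m / 2^(j+3) \<le> s / 2^(i+1) - s / 2^(j+1)" if "i < j" for i j :: nat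
  proof -
    have "(2::real)^(i+2) \<le> 2^(j+1)" "(2::real)^(i+3) \<le> 2^(j+3)"
      using that by (intro power_increasing; simp)+
    then have "s / 2^(j+1) \<le> s / 2^(i+2)" "m / 2^(j+3) \<le> m / 2^(i+3)"
      using assms(1,2) by (simp_all add: frac_le)
    moreover have "m / 2^(i+2) \<le> s / 2^(i+2)"
      using assms(2) by (simp add: divide_right_mono)
    moreover have "s / 2^(i+1) = 2 * (s / 2^(i+2))" "m / 2^(i+2) = 2 * (m / 2^(i+3))"
      by (simp_all add: field_simps power_add)
    ultimately show ?thesis
      by linarith
  qed
  show ?thesis
    using *[of n k] *[of k n] assms(3) by (cases "n < k") auto
qed

lemma separated_tents_in_interval:
  fixes p q \<delta> :: real
  assumes "p < q" "0 < \<delta>"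
  defines "r \<equiv> \<lambda>n::nat. min (q - p) \<delta> / 2^(n+3)" and "t \<equiv> \<lambda>n::nat. p + (q - p) / 2^(n+1)"
  shows "n \<noteq> k \<Longrightarrow> r n + r k \<le> \<bar>t n - t k\<bar>" "0 < r n" "r n \<le> \<delta>" "p \<le> t n" "t n + r n \<le> q"
proof -
  define m where "m = min (q - p) \<delta>"
  have m: "0 < m" "m \<le> q - p" "m \<le> \<delta>"
    using assms by (auto simp: m_def)
  have r: "r i = m / 2^(i+3)" for i
    by (simp add: r_def m_def)
  show "r n + r k \<le> \<bar>t n - t k\<bar>" if "n \<noteq> k"
    using dyadic_tents_separated [OF _ m(2) that] m(1) by (simp add: r t_def)
  show "0 < r n"
    using m(1) by (simp add: r)
  have "(8::real) \<le> 2^(n+3)" "(2::real) \<le> 2^(n+1)"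
    using power_increasing [of 3 "n+3" "2::real"] power_increasing [of 1 "n+1" "2::real"] by simp_all
  then have "m / 2^(n+3) \<le> m / 8" "(q - p) / 2^(n+1) \<le> (q - p) / 2"
    using m(1,2) by (intro divide_left_mono; simp)+
  moreover have "m / 8 \<le> (q - p) / 8" "(q - p) / 2 + (q - p) / 8 \<le> q - p"
    using m(2) \<open>p < q\<close> by (simp_all add: divide_right_mono)
  ultimately show "r n \<le> \<delta>" "t n + r n \<le> q"
    unfolding r t_def using m by linarith+
  show "p \<le> t n"
    using \<open>p < q\<close> by (simp add: t_def)
qed

lemma tent_perturbation_in_CX01:
  fixes g :: "nat \<Rightarrow> 'a \<Rightarrow> real" and t r :: "nat \<Rightarrow> real" and N :: nat and \<delta> :: real
  assumes X: "compact_space X" and u: "u \<in> mspace (CX01 X)"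
    and g: "\<And>n. continuous_map X (top_of_set {0..1}) (g n)"
    and sep: "\<And>n k. n \<noteq> k \<Longrightarrow> r n + r k \<le> \<bar>t n - t k\<bar>"
    and "\<And>n. t n + r n \<le> 1" "\<And>n. r n \<le> \<delta>" "0 \<le> \<delta>"
  defines "v \<equiv> restrict (\<lambda>x. u x + (\<Sum>n<N. g n x * tent (t n) (r n) (u x))) (topspace X)"
  shows "v \<in> mspace (CX01 X)" "mdist (CX01 X) u v \<le> \<delta>"
proof -
  have u01: "\<And>x. x \<in> topspace X \<Longrightarrow> 0 \<le> u x \<and> u x \<le> 1"
    and u_cont: "continuous_map X euclideanreal u"
    using u mem_CX01 [OF X] by auto
  have g01: "0 \<le> g n x" "g n x \<le> 1" if "x \<in> topspace X" for n x
    using g [of n] that by (auto simp: continuous_map_def)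
  have bounds: "u x \<le> v x" "v x \<le> 1" "v x - u x \<le> \<delta>" if "x \<in> topspace X" for x
    using tent_perturbation_bounds [OF sep, where lam = "\<lambda>n. g n x" and B = 1 and \<delta> = \<delta> and z = "u x" and N = N]
      g01 [OF that] u01 [OF that] assms(5-7) that
    by (simp_all add: v_def)
  show "v \<in> mspace (CX01 X)"
    unfolding mem_CX01 [OF X]
  proof (intro conjI ballI)
    show "v \<in> extensional (topspace X)"
      by (simp add: v_def)
    have "continuous_map X euclideanreal (\<lambda>x. u x + (\<Sum>n<N. g n x * tent (t n) (r n) (u x)))"
      using g unfolding tent_def continuous_map_in_subtopology
      by (intro continuous_intros u_cont) auto
    then show "continuous_map X euclideanreal v"
      by (rule continuous_map_eq) (simp add: v_def)
  qed (use bounds u01 in force)+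
  show "mdist (CX01 X) u v \<le> \<delta>"
    using bounds \<open>0 \<le> \<delta>\<close> by (intro mdist_CX01_le) (auto simp: abs_le_iff)
qed

lemma mspace_CX01_subset_omitting:
  assumes "compact_space X" "p < q" "\<not> (0 \<le> p \<and> q \<le> 1)"
  shows "mspace (CX01 X) \<subseteq> omitting X Y f p q"
proof
  fix u assume u: "u \<in> mspace (CX01 X)"
  have "\<not> {p..q} \<subseteq> u ` fibre X f y" for y
  proof
    assume "{p..q} \<subseteq> u ` fibre X f y"
    then have "p \<in> u ` fibre X f y" "q \<in> u ` fibre X f y"
      using \<open>p < q\<close> by auto
    then show False
      using assms(3) u mem_CX01 [OF assms(1)] by auto
  qed
  with u show "u \<in> omitting X Y f p q"
    by (simp add: omitting_def)
qed

lemma omitting_dense: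
  assumes X: "compact_space X" "Hausdorff_space X" and Y: "compact_space Y" "Hausdorff_space Y"
    and f: "continuous_map X Y f" and light: "\<forall>y\<in>topspace Y. subtopology X (fibre X f y) dim_le 0"
    and C: "C_space Y" and "p < q" and u: "u \<in> mspace (CX01 X)" and "\<epsilon> > 0"
  shows "\<exists>v\<in>omitting X Y f p q. mdist (CX01 X) u v < \<epsilon>"
proof (cases "0 \<le> p \<and> q \<le> 1")
  case False
  then have "u \<in> omitting X Y f p q"
    using mspace_CX01_subset_omitting [OF X(1) \<open>p < q\<close>] u by blast
  moreover have "mdist (CX01 X) u u = 0"
    using u by simp
  ultimately show ?thesis
    using \<open>\<epsilon> > 0\<close> by force
next
  case True
  have half: "0 < \<epsilon> / 2"
    using \<open>\<epsilon> > 0\<close> by simp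
  define r where "r = (\<lambda>n::nat. min (q - p) (\<epsilon> / 2) / 2^(n+3))"
  define t where "t = (\<lambda>n::nat. p + (q - p) / 2^(n+1))"
  have sep: "r n + r k \<le> \<bar>t n - t k\<bar>" if "n \<noteq> k" for n k
    using separated_tents_in_interval(1) [OF \<open>p < q\<close> half that] by (simp add: r_def t_def)
  have r: "0 < r n" "r n \<le> \<epsilon> / 2" and t: "p \<le> t n" "t n + r n \<le> q" for n
    using separated_tents_in_interval(2-5) [OF \<open>p < q\<close> half] by (simp_all add: r_def t_def)
  define a where "a n = t n - r n / 2" for n
  have a_less: "a n < t n" for n
    using r(1) [of n] by (simp add: a_def)
  have u_cont: "continuous_map X euclideanreal u"
    using u mem_CX01 [OF X(1)] by auto
  obtain g N where g: "\<And>n. continuous_map X (top_of_set {0..1::real}) (g n)"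
    and split: "\<And>y. y \<in> topspace Y \<Longrightarrow> \<exists>n<N. \<forall>x\<in>fibre X f y.
                  (a n < u x \<and> g n x = 1) \<or> (u x < t n \<and> g n x = 0)"
    by (rule C_space_light_level_functions [OF X Y f light C u_cont a_less]) (rule that)
  define v where "v = restrict (\<lambda>x. u x + (\<Sum>n<N. g n x * tent (t n) (r n) (u x))) (topspace X)"
  have "t n + r n \<le> 1" for n
    using t(2) [of n] True by linarith
  then have v: "v \<in> mspace (CX01 X)" "mdist (CX01 X) u v \<le> \<epsilon> / 2"
    using tent_perturbation_in_CX01 [where t = t and r = r, OF X(1) u g sep _ r(2)] half
    unfolding v_def by auto
  have "\<not> {p..q} \<subseteq> v ` fibre X f y" if y: "y \<in> topspace Y" for y
  proof -
    obtain n where "n < N"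
      and n: "\<forall>x\<in>fibre X f y. (t n - r n / 2 < u x \<and> g n x = 1) \<or> (u x < t n \<and> g n x = 0)"
      using split [OF y] unfolding a_def by blast
    have g01: "0 \<le> g k x \<and> g k x \<le> 1" if "x \<in> fibre X f y" for k x
      using g [of k] that by (auto simp: continuous_map_def)
    have "t n \<notin> (\<lambda>x. u x + (\<Sum>k<N. g k x * tent (t k) (r k) (u x))) ` fibre X f y"
      by (intro tent_perturbation_image_misses_centre [where S = "fibre X f y"])
        (simp_all add: sep r(1) g01 \<open>n < N\<close> n)
    moreover have "v ` fibre X f y = (\<lambda>x. u x + (\<Sum>k<N. g k x * tent (t k) (r k) (u x))) ` fibre X f y"
      by (auto simp: v_def)
    moreover have "t n \<in> {p..q}"
      using t [of n] r(1) [of n] by auto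
    ultimately show ?thesis
      by blast
  qed
  with v have "v \<in> omitting X Y f p q" "mdist (CX01 X) u v < \<epsilon>"
    using \<open>\<epsilon> > 0\<close> by (auto simp: omitting_def)
  then show ?thesis
    by blast
qed

lemma closure_of_omitting:
  assumes "compact_space X" "Hausdorff_space X" "compact_space Y" "Hausdorff_space Y"
    and "continuous_map X Y f" "\<forall>y\<in>topspace Y. subtopology X (fibre X f y) dim_le 0"
    and "C_space Y" "p < q"
  shows "mtopology_of (CX01 X) closure_of omitting X Y f p q = mspace (CX01 X)"
proof -
  interpret M: Metric_space "mspace (CX01 X)" "mdist (CX01 X)"
    by simp
  have "omitting X Y f p q \<subseteq> mspace (CX01 X)"
    by (auto simp: omitting_def)
  moreover have "\<forall>r>0. \<exists>v\<in>omitting X Y f p q. v \<in> M.mball u r" if "u \<in> mspace (CX01 X)" for u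
    using omitting_dense [OF assms that] that by (fastforce simp: omitting_def)
  ultimately show ?thesis
    unfolding mtopology_of_def M.metric_closure_of by auto
qed

lemma dim_le_0_images_eq_Inter_omitting:
  "{u \<in> mspace (CX01 X). \<forall>y\<in>topspace Y. subtopology euclideanreal (u ` fibre X f y) dim_le 0} =
     (\<Inter>(p, q) \<in> {(p, q). p \<in> \<rat> \<and> q \<in> \<rat> \<and> p < q}. omitting X Y f p q)"
  (is "?A = \<Inter>?G")
proof
  show "?A \<subseteq> \<Inter>?G"
    by (auto simp: omitting_def real_set_dim_le_0_iff)
  show "\<Inter>?G \<subseteq> ?A"
  proof
    fix u assume u: "u \<in> \<Inter>?G"
    have "u \<in> mspace (CX01 X)"
      using u Rats_0 Rats_1 by (force simp: omitting_def)
    moreover have "\<not> {a..b} \<subseteq> u ` fibre X f y" if "y \<in> topspace Y" "a < b" for y a b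
    proof -
      obtain p q where "p \<in> \<rat>" "q \<in> \<rat>" "a < p" "p < q" "q < b"
        using Rats_dense_in_real \<open>a < b\<close> by (meson dual_order.strict_trans)
      then show ?thesis
        using u that by (force simp: omitting_def)
    qed
    ultimately show "u \<in> ?A"
      by (simp add: real_set_dim_le_0_iff)
  qed
qed

theorem theorem1:
  fixes X :: "'a topology" and Y :: "'b topology" and f :: "'a \<Rightarrow> 'b"
  assumes "compact_space X" "Hausdorff_space X"
    and "compact_space Y" "Hausdorff_space Y"
    and "continuous_map X Y f" "f ` topspace X = topspace Y"
    and "\<forall>y\<in>topspace Y. subtopology X {x\<in>topspace X. f x = y} dim_le 0"
    and "C_space Y"
  defines "A \<equiv> {u \<in> mspace (CX01 X).
                 \<forall>y\<in>topspace Y. subtopology euclideanreal (u ` {x\<in>topspace X. f x = y}) dim_le 0}"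
  shows "gdelta_in (mtopology_of (CX01 X)) A \<and>
         mtopology_of (CX01 X) closure_of A = mspace (CX01 X)"
proof -
  interpret M: Metric_space "mspace (CX01 X)" "mdist (CX01 X)"
    by simp
  define \<G> where "\<G> = (\<lambda>(p, q). omitting X Y f p q) ` {(p, q). p \<in> \<rat> \<and> q \<in> \<rat> \<and> p < q}"
  have A: "A = \<Inter>\<G>"
    unfolding A_def \<G>_def by (rule dim_le_0_images_eq_Inter_omitting)
  have "countable \<G>"
    unfolding \<G>_def
    by (rule countable_image, rule countable_subset [of _ "\<rat> \<times> \<rat>"]) (auto simp: countable_rat)
  have open_dense: "openin M.mtopology T \<and> M.mtopology closure_of T = mspace (CX01 X)" if "T \<in> \<G>" for T
    using that openin_omitting [OF assms(1,3-5)] closure_of_omitting [OF assms(1-5,7,8)]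
    by (auto simp: \<G>_def mtopology_of_def)
  then have "(countable intersection_of openin M.mtopology) A"
    unfolding A intersection_of_def using \<open>countable \<G>\<close> by blast
  moreover have "M.mtopology closure_of A = mspace (CX01 X)"
    unfolding A using M.metric_Baire_category [OF mcomplete_CX01 \<open>countable \<G>\<close>] open_dense by blast
  ultimately show ?thesis
    unfolding gdelta_in_alt mtopology_of_def A_def by auto
qed

end
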